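(* Let $T:X\to Y$ be an injective linear operator between Archimedean vector lattices. If $T$ satisfies condition $(\beta)$, then the inverse operator $T^{-1}:TX\to X$ is disjointness preserving, i.e. whenever $y_1,y_2\in TX$ satisfy $|y_1|\wedge|y_2|=0$ in $Y$, then $|T^{-1}y_1|\wedge|T^{-1}y_2|=0$ in $X$.
   Context: All vector lattices are Archimedean. For a subset $A$ of a vector lattice $X$, $A^d=\{x\in X: |x|\wedge|a|=0 \text{ for all } a\in A\}$ and $A^{dd}=(A^d)^d$. For $a,b\in X$ we write $a\lhd b$ if $\{a\}^{dd}\subseteq\{b\}^{dd}$. A linear operator $T:X\to Y$ satisfies condition $(\beta)$ if $Ta\lhd Tb$ in $Y$ whenever $a\lhd b$ in $X$. A linear operator is disjointness preserving if it maps disjoint elements to disjoint elements. *)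

theory Defs
  imports Main "HOL.Real_Vector_Spaces"
begin

class vector_lattice = ordered_real_vector + lattice

class archimedean_vector_lattice = vector_lattice +
  assumes archimedean_vl: "0 \<le> x \<Longrightarrow> (\<forall>n::nat. of_nat n *\<^sub>R x \<le> y) \<Longrightarrow> x = 0"

definition vabs :: "'a::vector_lattice \<Rightarrow> 'a" where
  "vabs x = sup x (- x)"

definition dcompl :: "'a::vector_lattice set \<Rightarrow> 'a set" where
  "dcompl A = {x. \<forall>a\<in>A. inf (vabs x) (vabs a) = 0}"

definition vl_lhd :: "'a::vector_lattice \<Rightarrow> 'a \<Rightarrow> bool" where
  "vl_lhd a b \<longleftrightarrow> dcompl (dcompl {a}) \<subseteq> dcompl (dcompl {b})"

definition cond_beta :: "('a::vector_lattice \<Rightarrow> 'b::vector_lattice) \<Rightarrow> bool" where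
  "cond_beta T \<longleftrightarrow> (\<forall>a b. vl_lhd a b \<longrightarrow> vl_lhd (T a) (T b))"

end

theory Submission
  imports Defs
begin

text \<open>For \<open>x\<^sub>1, x\<^sub>2\<close> with \<open>T x\<^sub>1 \<perp> T x\<^sub>2\<close> put \<open>u = |x\<^sub>1| \<and> |x\<^sub>2|\<close>.
  Since \<open>|u| \<le> |x\<^sub>i|\<close> we have \<open>u \<lhd> x\<^sub>i\<close>, so condition \<open>(\<beta>)\<close> gives
  \<open>T u \<lhd> T x\<^sub>i\<close>, i.e. \<open>T u\<close> lies in both bands \<open>{T x\<^sub>1}\<^sup>d\<^sup>d\<close> and \<open>{T x\<^sub>2}\<^sup>d\<^sup>d\<close>.
  These bands are disjoint because \<open>T x\<^sub>1 \<perp> T x\<^sub>2\<close>, so \<open>T u\<close> is disjoint from itself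
  and hence zero; injectivity gives \<open>u = 0\<close>.\<close>

lemma vabs_nonneg: "0 \<le> vabs (x::'a::vector_lattice)"
proof -
  have "x \<le> vabs x" "- x \<le> vabs x" unfolding vabs_def by auto
  then have "0 \<le> vabs x + vabs x" using add_mono[of x "vabs x" "- x" "vabs x"] by simp
  then have "0 \<le> (1/2::real) *\<^sub>R (vabs x + vabs x)" by (intro scaleR_nonneg_nonneg) simp_all
  then show ?thesis by (simp only: scaleR_half_double)
qed

lemma vabs_of_nonneg: "0 \<le> (x::'a::vector_lattice) \<Longrightarrow> vabs x = x"
  unfolding vabs_def by (simp add: sup_absorb1 order_trans[of "- x" 0 x])

lemma vabs_eq_0_iff: "vabs (x::'a::vector_lattice) = 0 \<longleftrightarrow> x = 0"
proof
  assume "vabs x = 0"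
  then have "x \<le> 0" "- x \<le> 0" unfolding vabs_def by (metis sup_ge1, metis sup_ge2)
  then show "x = 0" by simp
qed (simp add: vabs_def)

lemma dcompl_antimono: "A \<subseteq> B \<Longrightarrow> dcompl B \<subseteq> dcompl A"
  unfolding dcompl_def by auto

lemma subset_ddcompl: "A \<subseteq> dcompl (dcompl A)"
  unfolding dcompl_def by (auto simp: inf_commute)

lemma mem_dcompl_self_eq_0: "x \<in> A \<Longrightarrow> x \<in> dcompl A \<Longrightarrow> x = 0"
proof -
  assume "x \<in> A" and "x \<in> dcompl A"
  then have "inf (vabs x) (vabs x) = 0" unfolding dcompl_def by blast
  then show "x = 0" by (simp add: vabs_eq_0_iff)
qed

lemma vl_lhd_imp_mem_ddcompl: "vl_lhd a b \<Longrightarrow> a \<in> dcompl (dcompl {b})"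
  unfolding vl_lhd_def using subset_ddcompl[of "{a}"] by blast

lemma vl_lhd_if_vabs_le:
  assumes "vabs a \<le> vabs (b::'a::vector_lattice)"
  shows "vl_lhd a b"
  unfolding vl_lhd_def
proof (rule dcompl_antimono, rule subsetI)
  fix w assume "w \<in> dcompl {b}"
  then have "inf (vabs w) (vabs b) = 0" by (simp add: dcompl_def)
  moreover have "inf (vabs w) (vabs a) \<le> inf (vabs w) (vabs b)"
    using assms by (rule inf_mono[OF order_refl])
  moreover have "0 \<le> inf (vabs w) (vabs a)" by (simp add: vabs_nonneg)
  ultimately show "w \<in> dcompl {a}" by (simp add: dcompl_def antisym)
qed

lemma vl_lhd_inf_vabs: "vl_lhd (inf (vabs x) (vabs y)) (x::'a::vector_lattice)"
  by (rule vl_lhd_if_vabs_le) (simp add: vabs_of_nonneg vabs_nonneg)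

lemma vl_lhd_disjoint_eq_0:
  assumes "inf (vabs b) (vabs c) = 0" and "vl_lhd a b" and "vl_lhd a (c::'a::vector_lattice)"
  shows "a = 0"
proof (rule mem_dcompl_self_eq_0)
  have "{c} \<subseteq> dcompl {b}" using assms(1) by (simp add: dcompl_def inf_commute)
  then show "a \<in> dcompl {c}"
    using vl_lhd_imp_mem_ddcompl[OF assms(2)] dcompl_antimono by blast
  show "a \<in> dcompl (dcompl {c})" using assms(3) by (rule vl_lhd_imp_mem_ddcompl)
qed

lemma cond_beta_reflects_disjointness:
  fixes T :: "'a::vector_lattice \<Rightarrow> 'b::vector_lattice"
  assumes "linear T" and "inj T" and "cond_beta T"
    and "inf (vabs (T x\<^sub>1)) (vabs (T x\<^sub>2)) = 0"
  shows "inf (vabs x\<^sub>1) (vabs x\<^sub>2) = 0"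
proof -
  let ?u = "inf (vabs x\<^sub>1) (vabs x\<^sub>2)"
  have "vl_lhd (T ?u) (T x\<^sub>1)" "vl_lhd (T ?u) (T x\<^sub>2)"
    using assms(3) vl_lhd_inf_vabs[of x\<^sub>1 x\<^sub>2] vl_lhd_inf_vabs[of x\<^sub>2 x\<^sub>1]
    unfolding cond_beta_def by (simp_all add: inf_commute)
  then have "T ?u = T 0"
    using vl_lhd_disjoint_eq_0 assms(4) linear_0[OF assms(1)] by simp
  with assms(2) show ?thesis by (rule injD)
qed

theorem theorem2p4:
  fixes T :: "'a::archimedean_vector_lattice \<Rightarrow> 'b::archimedean_vector_lattice"
  assumes "linear T" and "inj T" and "cond_beta T"
  shows "\<forall>y1\<in>range T. \<forall>y2\<in>range T.
           inf (vabs y1) (vabs y2) = 0 \<longrightarrow> inf (vabs (inv T y1)) (vabs (inv T y2)) = 0"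
  using cond_beta_reflects_disjointness[OF assms] assms(2) by (auto simp: inv_f_f)

end
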